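(* Let $N>1$ and suppose $\tau$ is a linear-fractional self-map of $B_N$ such that $\tau(\lambda e_1)=\lambda e_1$ for every $\lambda\in\mathbb C$ with $|\lambda|=1$, where $e_1=(1,0,\dots,0)$. Then there is an $(N-1)\times(N-1)$ matrix $A'$ such that $\tau(z_1,z_2,\dots,z_N)=(z_1,A'z')$ for all $z\in B_N$, where $z'=(z_2,\dots,z_N)$.
   Context: $B_N$ is the open unit ball of $\mathbb C^N$ with inner product $\langle z,w\rangle=\sum z_j\overline{w_j}$. A linear-fractional self-map of $B_N$ is a map $\tau(z)=\frac{Az+B}{\langle z,C\rangle+d}$ ($A$ an $N\times N$ matrix, $B,C\in\mathbb C^N$, $d\in\mathbb C$) analytic on $B_N$ with $\tau(B_N)\subseteq B_N$; it is analytic on a neighborhood of $\overline{B_N}$. The hypothesis says $\tau$ restricted to the complex line $[e_1]=\{\lambda e_1:\lambda\in\mathbb C\}$ is the identity on $[e_1]\cap\partial B_N$. *)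

theory Defs
  imports Complex_Main
begin

text \<open>Vectors of C^N are modelled as functions nat => complex; coordinate z_(k+1)
  of the paper is z k (indices 0..N-1), coordinates at indices >= N are 0.\<close>

definition cinner :: "nat \<Rightarrow> (nat \<Rightarrow> complex) \<Rightarrow> (nat \<Rightarrow> complex) \<Rightarrow> complex" where
  "cinner N z w = (\<Sum>j<N. z j * cnj (w j))"

definition unit_ballN :: "nat \<Rightarrow> (nat \<Rightarrow> complex) set" where
  "unit_ballN N = {z. (\<forall>j\<ge>N. z j = 0) \<and> (\<Sum>j<N. (cmod (z j))\<^sup>2) < 1}"

definition e1 :: "nat \<Rightarrow> complex" where
  "e1 = (\<lambda>i. if i = 0 then 1 else 0)"

definition lft :: "nat \<Rightarrow> (nat \<Rightarrow> nat \<Rightarrow> complex) \<Rightarrow> (nat \<Rightarrow> complex) \<Rightarrow> (nat \<Rightarrow> complex)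
    \<Rightarrow> complex \<Rightarrow> (nat \<Rightarrow> complex) \<Rightarrow> (nat \<Rightarrow> complex)" where
  "lft N A B C d z = (\<lambda>i. if i < N then ((\<Sum>j<N. A i j * z j) + B i) / (cinner N z C + d) else 0)"

definition lf_selfmap :: "nat \<Rightarrow> ((nat \<Rightarrow> complex) \<Rightarrow> (nat \<Rightarrow> complex)) \<Rightarrow> bool" where
  "lf_selfmap N \<tau> \<longleftrightarrow> (\<exists>A B C d. \<tau> = lft N A B C d
      \<and> (\<forall>z\<in>unit_ballN N. cinner N z C + d \<noteq> 0)
      \<and> (\<forall>z\<in>unit_ballN N. \<tau> z \<in> unit_ballN N))"

end

(* On the circle lambda e1 the fixed-point condition tau(lambda e1) = lambda e1 is a polynomial
   identity of degree two in lambda; it forces B = 0, A e1 = d e1 and C_1 = 0.  On the slice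
   {x e1 + y e_k} the first coordinate of tau is then (x + alpha y) / (1 + gamma y) with
   alpha = A_1k / d and gamma = conj C_k / d, and it maps the two-dimensional ball into the
   disc.  Approaching the fixed boundary point v e1 along x = v (1 - s^2), y = u v s and comparing
   the terms of first order in s gives Re (alpha u) <= Re (gamma u v) for all unimodular u, v,
   which is only possible if alpha = gamma = 0.  So the first row of A and C vanish, and tau is
   z |-> (z_1, A' z'). *)

theory Submission
  imports Defs
begin

lemma unit_circle_quadratic_coeffs_eq_0:
  fixes a b c :: complex
  assumes "\<And>l. cmod l = 1 \<Longrightarrow> a * l\<^sup>2 + b * l + c = 0"
  shows "a = 0" "b = 0" "c = 0"
proof -
  have "a + b + c = 0" "a - b + c = 0" "- a + b * \<i> + c = 0"
    using assms[of 1] assms[of "-1"] assms[of \<i>] by (simp_all add: power2_eq_square algebra_simps)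
  then show "a = 0" "b = 0" "c = 0"
    by (simp_all add: complex_eq_iff)
qed

lemma Re_le_Re_if_norm_less:
  fixes a b :: complex
  assumes less: "\<And>s. 0 < s \<Longrightarrow> s < 1 \<Longrightarrow>
      cmod (of_real (1 - s\<^sup>2) + a * of_real s) < cmod (1 + b * of_real s)"
  shows "Re a \<le> Re b"
proof -
  define K where "K = 1 + cmod a + (cmod b)\<^sup>2 / 2"
  have bound: "Re a - Re b \<le> s * K" if s: "0 < s" "s < 1" for s
  proof -
    have "(cmod (of_real (1 - s\<^sup>2) + a * of_real s))\<^sup>2 < (cmod (1 + b * of_real s))\<^sup>2"
      using less[OF s] by (simp add: power_strict_mono)
    then have "(1 - s\<^sup>2 + s * Re a)\<^sup>2 + (s * Im a)\<^sup>2 < (1 + s * Re b)\<^sup>2 + (s * Im b)\<^sup>2"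
      by (simp add: cmod_power2 mult.commute)
    then have "2 * s * (Re a - Re b) < s\<^sup>2 * (2 - s\<^sup>2 + 2 * (s * Re a) + (cmod b)\<^sup>2 - (cmod a)\<^sup>2)"
      unfolding cmod_power2 by (simp add: power2_eq_square algebra_simps)
    also have "\<dots> \<le> s\<^sup>2 * (2 * K)"
    proof (rule mult_left_mono)
      have "s * Re a \<le> s * cmod a"
        using s complex_Re_le_cmod by (simp add: mult_left_mono)
      also have "\<dots> \<le> cmod a"
        using s by (simp add: mult_left_le_one_le)
      finally have "s * Re a \<le> cmod a" .
      then show "2 - s\<^sup>2 + 2 * (s * Re a) + (cmod b)\<^sup>2 - (cmod a)\<^sup>2 \<le> 2 * K"
        by (simp add: K_def) (use zero_le_power2[of s] zero_le_power2[of "cmod a"] in linarith)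
    qed simp
    finally show ?thesis
      using s by (simp add: power2_eq_square)
  qed
  have "((\<lambda>s. s * K) \<longlongrightarrow> 0) (at_right 0)"
    by (intro tendsto_mult_left_zero tendsto_ident_at)
  moreover have "\<forall>\<^sub>F s in at_right 0. Re a - Re b \<le> s * K"
    using eventually_at_right_real[OF zero_less_one] by eventually_elim (simp add: bound)
  ultimately have "Re a - Re b \<le> 0"
    by (rule tendsto_lowerbound) simp
  then show ?thesis by simp
qed

lemma eq_0_if_Re_mult_unit_nonpos:
  fixes z :: complex
  assumes "\<And>u. cmod u = 1 \<Longrightarrow> Re (z * u) \<le> 0"
  shows "z = 0"
  using assms[of 1] assms[of "-1"] assms[of \<i>] assms[of "-\<i>"] by (simp add: complex_eq_iff)

lemma ball_to_disc_fraction_trivial: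
  fixes \<alpha> \<gamma> :: complex
  assumes less: "\<And>x y. (cmod x)\<^sup>2 + (cmod y)\<^sup>2 < 1 \<Longrightarrow> cmod (x + \<alpha> * y) < cmod (1 + \<gamma> * y)"
  shows "\<alpha> = 0" "\<gamma> = 0"
proof -
  have Re_le: "Re (\<alpha> * u) \<le> Re (\<gamma> * u * v)" if u: "cmod u = 1" and v: "cmod v = 1" for u v
  proof (rule Re_le_Re_if_norm_less)
    fix s :: real
    assume s: "0 < s" "s < 1"
    have "s\<^sup>2 < 1"
      using s by (simp add: power_less_one_iff)
    have norms: "cmod (v * of_real (1 - s\<^sup>2)) = 1 - s\<^sup>2" "cmod (u * v * of_real s) = s"
      using u v s \<open>s\<^sup>2 < 1\<close> by (simp_all add: norm_mult del: of_real_diff of_real_power)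
    have "(cmod (v * of_real (1 - s\<^sup>2)))\<^sup>2 + (cmod (u * v * of_real s))\<^sup>2 < 1"
      unfolding norms using s \<open>s\<^sup>2 < 1\<close> by (simp add: power2_eq_square algebra_simps)
    then have "cmod (v * of_real (1 - s\<^sup>2) + \<alpha> * (u * v * of_real s)) < cmod (1 + \<gamma> * (u * v * of_real s))"
      by (rule less)
    moreover have "v * of_real (1 - s\<^sup>2) + \<alpha> * (u * v * of_real s) = v * (of_real (1 - s\<^sup>2) + \<alpha> * u * of_real s)"
      by (simp add: algebra_simps)
    ultimately show "cmod (of_real (1 - s\<^sup>2) + \<alpha> * u * of_real s) < cmod (1 + \<gamma> * u * v * of_real s)"
      using v by (simp add: norm_mult mult.assoc)
  qed
  show "\<alpha> = 0"
  proof (rule eq_0_if_Re_mult_unit_nonpos)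
    fix u :: complex
    assume "cmod u = 1"
    then show "Re (\<alpha> * u) \<le> 0"
      using Re_le[of u 1] Re_le[of u "-1"] by simp
  qed
  then show "\<gamma> = 0"
    using Re_le[of "-1"] by (intro eq_0_if_Re_mult_unit_nonpos) simp
qed

lemma sum_mult_e1: "0 < N \<Longrightarrow> (\<Sum>j<N. f j * (l * e1 j)) = f 0 * l"
  by (simp add: e1_def if_distrib cong: if_cong)

lemma cinner_e1: "0 < N \<Longrightarrow> cinner N (\<lambda>j. l * e1 j) C = l * cnj (C 0)"
  using sum_mult_e1[of N "\<lambda>j. cnj (C j)"] by (simp add: cinner_def mult.commute)

lemma lft_e1:
  "i < N \<Longrightarrow> lft N A B C d (\<lambda>j. l * e1 j) i = (A i 0 * l + B i) / (l * cnj (C 0) + d)"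
  by (simp add: lft_def sum_mult_e1 cinner_e1)

text \<open>The vector x e1 + y e_(k+1), in the 0-based indexing of the definitions.\<close>
definition two_point :: "nat \<Rightarrow> complex \<Rightarrow> complex \<Rightarrow> nat \<Rightarrow> complex" where
  "two_point k x y = (\<lambda>j. if j = 0 then x else if j = k then y else 0)"

lemma sum_two_point:
  assumes "0 < k" "k < N" "\<And>j. g j 0 = 0"
  shows "(\<Sum>j<N. g j (two_point k x y j)) = g 0 x + g k y"
proof -
  have "g j (two_point k x y j) = (if j = 0 then g 0 x else 0) + (if j = k then g k y else 0)" for j
    using assms by (simp add: two_point_def)
  then show ?thesis
    using assms by (simp add: sum.distrib)
qed

lemma two_point_in_unit_ballN:
  assumes "0 < k" "k < N" "(cmod x)\<^sup>2 + (cmod y)\<^sup>2 < 1"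
  shows "two_point k x y \<in> unit_ballN N"
  using assms sum_two_point[OF assms(1,2), of "\<lambda>_ v. (cmod v)\<^sup>2"]
  by (simp add: unit_ballN_def two_point_def)

lemma cinner_two_point:
  "0 < k \<Longrightarrow> k < N \<Longrightarrow> cinner N (two_point k x y) C = x * cnj (C 0) + y * cnj (C k)"
  using sum_two_point[of k N "\<lambda>j v. v * cnj (C j)"] by (simp add: cinner_def)

lemma lft_two_point:
  assumes "0 < k" "k < N"
  shows "lft N A B C d (two_point k x y) 0
    = (A 0 0 * x + A 0 k * y + B 0) / (x * cnj (C 0) + y * cnj (C k) + d)"
  using assms sum_two_point[OF assms, of "\<lambda>j v. A 0 j * v"]
  by (simp add: lft_def cinner_two_point)

lemma norm_less_1_if_in_unit_ballN:
  assumes "z \<in> unit_ballN N" "i < N"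
  shows "cmod (z i) < 1"
proof -
  have "(cmod (z i))\<^sup>2 \<le> (\<Sum>j<N. (cmod (z j))\<^sup>2)"
    using assms(2) by (intro member_le_sum) auto
  also have "\<dots> < 1"
    using assms(1) by (simp add: unit_ballN_def)
  finally show ?thesis
    by (simp add: power_less_one_iff)
qed

lemma lft_fixing_e1_circle_coeffs:
  assumes "0 < N"
    and fixes_circle: "\<And>l. cmod l = 1 \<Longrightarrow> lft N A B C d (\<lambda>i. l * e1 i) = (\<lambda>i. l * e1 i)"
  shows "C 0 = 0" "A 0 0 = d" "\<And>i. i < N \<Longrightarrow> B i = 0" "\<And>i. 0 < i \<Longrightarrow> i < N \<Longrightarrow> A i 0 = 0"
proof -
  have fixed: "(A i 0 * l + B i) / (l * cnj (C 0) + d) = l * e1 i" if "cmod l = 1" "i < N" for l i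
    using fixes_circle[OF that(1)] lft_e1[OF that(2)] by metis
  have den: "l * cnj (C 0) + d \<noteq> 0" if "cmod l = 1" for l
    using fixed[OF that assms(1)] that by (auto simp: e1_def)
  have num: "A i 0 * l + B i = l * e1 i * (l * cnj (C 0) + d)" if "cmod l = 1" "i < N" for l i
    using fixed[OF that] den[OF that(1)] by (simp add: divide_eq_eq)
  have "cnj (C 0) * l\<^sup>2 + (d - A 0 0) * l + - B 0 = 0" if "cmod l = 1" for l
    using num[OF that assms(1)] by (simp add: e1_def power2_eq_square algebra_simps)
  note coeffs_0 = unit_circle_quadratic_coeffs_eq_0[OF this]
  then show "C 0 = 0" "A 0 0 = d"
    by simp_all
  have coeffs_i: "A i 0 = 0 \<and> B i = 0" if "0 < i" "i < N" for i
  proof -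
    have "0 * l\<^sup>2 + A i 0 * l + B i = 0" if "cmod l = 1" for l
      using num[OF that \<open>i < N\<close>] \<open>0 < i\<close> by (simp add: e1_def)
    from unit_circle_quadratic_coeffs_eq_0(2,3)[OF this] show ?thesis ..
  qed
  then show "A i 0 = 0" if "0 < i" "i < N" for i
    using that by blast
  show "B i = 0" if "i < N" for i
    using coeffs_0(3) coeffs_i[of i] that by (cases "i = 0") auto
qed

lemma lft_self_map_first_row_eq_0:
  assumes den: "\<forall>z\<in>unit_ballN N. cinner N z C + d \<noteq> 0"
    and maps: "\<forall>z\<in>unit_ballN N. lft N A B C d z \<in> unit_ballN N"
    and "d \<noteq> 0" "C 0 = 0" "A 0 0 = d" "B 0 = 0" "0 < k" "k < N"
  shows "A 0 k = 0" "C k = 0"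
proof -
  have "cmod (x + A 0 k / d * y) < cmod (1 + cnj (C k) / d * y)"
    if "(cmod x)\<^sup>2 + (cmod y)\<^sup>2 < 1" for x y
  proof -
    have z: "two_point k x y \<in> unit_ballN N"
      using two_point_in_unit_ballN assms(7,8) that by blast
    have num_eq: "A 0 0 * x + A 0 k * y + B 0 = d * (x + A 0 k / d * y)"
      and den_eq: "x * cnj (C 0) + y * cnj (C k) + d = d * (1 + cnj (C k) / d * y)"
      using assms(3-6) by (simp_all add: field_simps)
    have "d * (1 + cnj (C k) / d * y) \<noteq> 0"
      using den z den_eq cinner_two_point[OF assms(7,8)] by metis
    then have nonzero: "1 + cnj (C k) / d * y \<noteq> 0"
      by simp
    have "lft N A B C d (two_point k x y) 0 = (x + A 0 k / d * y) / (1 + cnj (C k) / d * y)"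
      unfolding lft_two_point[OF assms(7,8)] num_eq den_eq using \<open>d \<noteq> 0\<close> by simp
    moreover have "cmod (lft N A B C d (two_point k x y) 0) < 1"
      using maps z assms(8) by (intro norm_less_1_if_in_unit_ballN) auto
    ultimately show ?thesis
      using nonzero by (simp add: norm_divide divide_less_eq)
  qed
  from ball_to_disc_fraction_trivial[OF this]
  show "A 0 k = 0" "C k = 0"
    using \<open>d \<noteq> 0\<close> by simp_all
qed

lemma lft_eq_block_diagonal:
  assumes "0 < N" "d \<noteq> 0" "A 0 0 = d"
    and "\<And>j. j < N \<Longrightarrow> C j = 0" "\<And>i. i < N \<Longrightarrow> B i = 0"
    and "\<And>j. 0 < j \<Longrightarrow> j < N \<Longrightarrow> A 0 j = 0 \<and> A j 0 = 0"
  shows "lft N A B C d z = (\<lambda>i. if i = 0 then z 0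
           else if i < N then (\<Sum>j\<in>{1..<N}. A i j / d * z j) else 0)"
proof
  fix i
  have "{..<N} = insert 0 {1..<N}"
    using assms(1) by auto
  then have split: "(\<Sum>j<N. A i j * z j) = A i 0 * z 0 + (\<Sum>j\<in>{1..<N}. A i j * z j)"
    by simp
  have "cinner N z C = 0"
    using assms(4) by (simp add: cinner_def)
  then have lft_i: "lft N A B C d z i = (if i < N then (\<Sum>j<N. A i j * z j) / d else 0)"
    using assms(5) by (simp add: lft_def)
  consider "i = 0" | "0 < i" "i < N" | "N \<le> i"
    by linarith
  then show "lft N A B C d z i = (if i = 0 then z 0
           else if i < N then (\<Sum>j\<in>{1..<N}. A i j / d * z j) else 0)"
  proof cases
    case 1
    then show ?thesis
      using assms lft_i split by simp
  next
    case 2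
    then show ?thesis
      using assms(6) lft_i split by (simp add: sum_divide_distrib)
  next
    case 3
    then show ?thesis
      using lft_i assms(1) by simp
  qed
qed

theorem proposition1:
  fixes N :: nat and \<tau> :: "(nat \<Rightarrow> complex) \<Rightarrow> (nat \<Rightarrow> complex)"
  assumes "N > 1"
    and "lf_selfmap N \<tau>"
    and "\<forall>lam::complex. cmod lam = 1 \<longrightarrow> \<tau> (\<lambda>i. lam * e1 i) = (\<lambda>i. lam * e1 i)"
  shows "\<exists>A' :: nat \<Rightarrow> nat \<Rightarrow> complex. \<forall>z\<in>unit_ballN N.
           \<tau> z = (\<lambda>i. if i = 0 then z 0
                      else if i < N then (\<Sum>j\<in>{1..<N}. A' i j * z j) else 0)"
proof -
  obtain A B C d where \<tau>: "\<tau> = lft N A B C d"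
    and den: "\<forall>z\<in>unit_ballN N. cinner N z C + d \<noteq> 0"
    and maps: "\<forall>z\<in>unit_ballN N. lft N A B C d z \<in> unit_ballN N"
    using assms(2) unfolding lf_selfmap_def by blast
  have "0 < N"
    using assms(1) by simp
  have "d \<noteq> 0"
    using den[rule_format, of "\<lambda>_. 0"] by (simp add: unit_ballN_def cinner_def)
  have "lft N A B C d (\<lambda>i. l * e1 i) = (\<lambda>i. l * e1 i)" if "cmod l = 1" for l
    using assms(3) that unfolding \<tau> by blast
  note circle = lft_fixing_e1_circle_coeffs[OF \<open>0 < N\<close> this]
  have "C 0 = 0" "A 0 0 = d" "B 0 = 0"
    using circle \<open>0 < N\<close> by auto
  then have first_row: "A 0 j = 0 \<and> C j = 0" if "0 < j" "j < N" for j
    using lft_self_map_first_row_eq_0[OF den maps \<open>d \<noteq> 0\<close>] that by blast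
  then have "C j = 0" if "j < N" for j
    using \<open>C 0 = 0\<close> that by (cases "j = 0") auto
  then have "lft N A B C d z = (\<lambda>i. if i = 0 then z 0
           else if i < N then (\<Sum>j\<in>{1..<N}. A i j / d * z j) else 0)" for z
    using circle first_row \<open>0 < N\<close> \<open>d \<noteq> 0\<close> \<open>A 0 0 = d\<close>
    by (intro lft_eq_block_diagonal) auto
  then show ?thesis
    unfolding \<tau> by (intro exI[of _ "\<lambda>i j. A i j / d"] ballI) simp
qed

end
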